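(* Let $N\ge 2$, let $T_N$ be the homogeneous tree in which every vertex has degree $N$, and fix a root $o$. Let $m>1$ and $(p,q)\in G_3=\{(p,q): p<0,\ m-1<q<m\}$. Then for every $\epsilon>0$ there exists a weight $\mu$ on $T_N$ such that $$W_o(n)\asymp n^{\frac{q}{q-m+1}}(\ln n)^{\frac{m-1}{q-m+1}+\epsilon}\quad\text{for } n\ge 2,$$ and the inequality $\Delta_m u+u^p|\nabla u|^q\le 0$ on $T_N$ admits a nontrivial positive solution.
   Context: A weight on a graph $(V,E)$ is a symmetric function $\mu:V\times V\to[0,\infty)$ with $\mu_{xy}=\mu_{yx}>0$ if and only if $x\sim y$ (adjacent); $\mu(x)=\sum_{y\sim x}\mu_{xy}$. For $m>1$, $\Delta_m u(x)=\frac{1}{\mu(x)}\sum_{y\sim x}\mu_{xy}|u(y)-u(x)|^{m-2}(u(y)-u(x))$ and $|\nabla u(x)|=\big(\sum_{y\sim x}\frac{\mu_{xy}}{2\mu(x)}(u(y)-u(x))^2\big)^{1/2}$. $d$ is the graph distance, $B(o,n)=\{x: d(o,x)\le n\}$, $W_o(n)=\sum_{x\in B(o,n),\,y\in V,\,d(o,x)<d(o,y)}\mu_{xy}$. $f(n)\asymp g(n)$ for $n\ge2$ means there are constants $c,C>0$ with $c\,g(n)\le f(n)\le C\,g(n)$ for all $n\ge 2$. A nontrivial positive solution is a non-constant $u:V\to(0,\infty)$ with $\Delta_m u(x)+u(x)^p|\nabla u(x)|^q\le0$ for all $x\in V$. *)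

theory Defs
  imports Complex_Main
begin

text \<open>The homogeneous tree T_N: vertices are words a_0 a_1 ... a_k (nat lists) with
  a_0 < N and a_i < N - 1 for i \<ge> 1; the root is the empty word; x ~ y iff one word
  extends the other by exactly one letter. The root has N children, every other vertex
  has N - 1 children and one parent, so every vertex has degree N.\<close>

definition tree_V :: "nat \<Rightarrow> nat list set" where
  "tree_V N = {xs. \<forall>i<length xs. xs ! i < (if i = 0 then N else N - 1)}"

definition tree_adj :: "nat \<Rightarrow> nat list \<Rightarrow> nat list \<Rightarrow> bool" where
  "tree_adj N x y \<longleftrightarrow> x \<in> tree_V N \<and> y \<in> tree_V N \<and> (\<exists>a. y = x @ [a] \<or> x = y @ [a])"

definition nbrs :: "('a \<Rightarrow> 'a \<Rightarrow> bool) \<Rightarrow> 'a \<Rightarrow> 'a set" where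
  "nbrs adj x = {y. adj x y}"

definition gdist :: "('a \<Rightarrow> 'a \<Rightarrow> bool) \<Rightarrow> 'a \<Rightarrow> 'a \<Rightarrow> nat" where
  "gdist adj x y = (LEAST n. (adj ^^ n) x y)"

definition is_weight :: "'a set \<Rightarrow> ('a \<Rightarrow> 'a \<Rightarrow> bool) \<Rightarrow> ('a \<Rightarrow> 'a \<Rightarrow> real) \<Rightarrow> bool" where
  "is_weight V adj mu \<longleftrightarrow> (\<forall>x\<in>V. \<forall>y\<in>V. mu x y = mu y x \<and> mu x y \<ge> 0 \<and> (mu x y > 0 \<longleftrightarrow> adj x y))"

definition vmeas :: "('a \<Rightarrow> 'a \<Rightarrow> bool) \<Rightarrow> ('a \<Rightarrow> 'a \<Rightarrow> real) \<Rightarrow> 'a \<Rightarrow> real" where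
  "vmeas adj mu x = (\<Sum>y\<in>nbrs adj x. mu x y)"

text \<open>m-Laplacian; |t|^(m-2) t is read as 0 at t = 0 (0 powr a = 0).\<close>
definition mLap :: "('a \<Rightarrow> 'a \<Rightarrow> bool) \<Rightarrow> ('a \<Rightarrow> 'a \<Rightarrow> real) \<Rightarrow> real \<Rightarrow> ('a \<Rightarrow> real) \<Rightarrow> 'a \<Rightarrow> real" where
  "mLap adj mu m u x = (1 / vmeas adj mu x) *
     (\<Sum>y\<in>nbrs adj x. mu x y * \<bar>u y - u x\<bar> powr (m - 2) * (u y - u x))"

definition gradn :: "('a \<Rightarrow> 'a \<Rightarrow> bool) \<Rightarrow> ('a \<Rightarrow> 'a \<Rightarrow> real) \<Rightarrow> ('a \<Rightarrow> real) \<Rightarrow> 'a \<Rightarrow> real" where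
  "gradn adj mu u x = sqrt (\<Sum>y\<in>nbrs adj x. mu x y / (2 * vmeas adj mu x) * (u y - u x)\<^sup>2)"

text \<open>W_o(n); pairs with mu x y = 0 (non-adjacent) contribute nothing, so we sum over edges.\<close>
definition Wo :: "'a set \<Rightarrow> ('a \<Rightarrow> 'a \<Rightarrow> bool) \<Rightarrow> ('a \<Rightarrow> 'a \<Rightarrow> real) \<Rightarrow> 'a \<Rightarrow> nat \<Rightarrow> real" where
  "Wo V adj mu r n = (\<Sum>(x, y)\<in>{(x, y). x \<in> V \<and> y \<in> V \<and> adj x y \<and> gdist adj r x \<le> n
        \<and> gdist adj r x < gdist adj r y}. mu x y)"

definition nontrivial_pos_solution ::
  "'a set \<Rightarrow> ('a \<Rightarrow> 'a \<Rightarrow> bool) \<Rightarrow> ('a \<Rightarrow> 'a \<Rightarrow> real) \<Rightarrow> real \<Rightarrow> real \<Rightarrow> real \<Rightarrow> ('a \<Rightarrow> real) \<Rightarrow> bool" where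
  "nontrivial_pos_solution V adj mu m p q u \<longleftrightarrow>
     (\<forall>x\<in>V. u x > 0) \<and> (\<exists>x\<in>V. \<exists>y\<in>V. u x \<noteq> u y) \<and>
     (\<forall>x\<in>V. mLap adj mu m u x + u x powr p * gradn adj mu u x powr q \<le> 0)"

end

theory Submission
  imports Defs "HOL-Analysis.Analysis"
begin

text \<open>The weight is radial: all edges between the spheres of radii k and k+1 carry the same
  weight, chosen so that the layer has total weight (k+3)^a ln(k+3)^(a+\<epsilon>) with
  a = (m-1)/(q-m+1); summing the layers gives the growth of W_o. The solution is radial and
  decreasing, u(x) = 1 + (\<Sum>i \<ge> |x|. E_i), with the summable decrements
  E_k = (s / ((k+3) ln(k+3)))^(1/(q-m+1)). The flux (layer weight) * E_k^(m-1) = s^a ln(k+3)^\<epsilon>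
  then increases in k, so \<Delta>_m u < 0, and its relative increase, of order \<epsilon> / ((k+3) ln(k+3)),
  dominates the gradient term u^p |\<nabla>u|^q \<le> C E_k^q = C E_k^(m-1) s / ((k+3) ln(k+3))
  once s is small.\<close>

text \<open>At a vertex with parent-edge weight A, total child-edge weight B, and decrements E1 of u
  towards the parent and E2 towards the children, the left-hand side is
  \<Delta>_m u + u^p |\<nabla>u|^q with V = u(x).\<close>

lemma mLap_gradient_balance:
  fixes A B E1 E2 R V \<rho> m p q :: real
  assumes A: "A \<ge> 0" and B: "B > 0" and E2: "0 < E2" "E2 \<le> E1" and R: "E1 \<le> R * E2"
    and V: "V \<ge> 1" and p: "p \<le> 0" and q: "q > 0" and m: "m > 1"
    and flux: "A * E1 powr (m-1) \<le> (1-\<rho>) * (B * E2 powr (m-1))"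
    and slope: "2 * R powr q * E2 powr (q-m+1) \<le> \<rho>"
  shows "(A * E1 powr (m-1) - B * E2 powr (m-1)) / (A+B)
          + V powr p * sqrt ((A*E1^2 + B*E2^2)/(2*(A+B))) powr q \<le> 0"
proof -
  define g where "g = sqrt ((A*E1^2 + B*E2^2)/(2*(A+B)))"
  have E1: "E1 > 0" using E2 by linarith
  have "0 < R * E2" using R E1 by linarith
  then have R_pos: "R > 0" using E2 by (simp add: zero_less_mult_iff)
  have "0 < 2 * R powr q * E2 powr (q-m+1)" using R_pos E2 by simp
  then have rho: "\<rho> \<ge> 0" using slope by linarith
  have E2_pos: "E2 powr (m-1) > 0" using E2 by simp
  have "A*E1^2 + B*E2^2 \<le> (A+B)*E1^2"
    using A B E2 by (simp add: distrib_right mult_left_mono power_mono)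
  also have "\<dots> \<le> E1^2 * (2*(A+B))"
    using A B by (simp add: algebra_simps)
  finally have "(A*E1^2 + B*E2^2)/(2*(A+B)) \<le> E1^2"
    using A B by (simp add: divide_le_eq)
  then have "g \<le> E1" unfolding g_def using E1 real_sqrt_le_mono by fastforce
  moreover have "g \<ge> 0" unfolding g_def using A B by simp
  ultimately have "g powr q \<le> (R*E2) powr q"
    using R q by (meson order_trans powr_mono2 less_imp_le)
  also have "\<dots> = R powr q * E2 powr (q-m+1) * E2 powr (m-1)"
    using R_pos E2 by (simp add: powr_mult powr_add[symmetric])
  also have "\<dots> \<le> \<rho>/2 * E2 powr (m-1)" using slope E2_pos by (simp add: mult_right_mono)
  finally have grad: "g powr q \<le> \<rho>/2 * E2 powr (m-1)" .
  have "V powr p \<le> 1" using powr_mono[of p 0 V] V p by simp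
  then have "V powr p * g powr q \<le> g powr q" by (simp add: mult_left_le_one_le)
  with grad have grad_term: "V powr p * g powr q \<le> \<rho>/2 * E2 powr (m-1)" by linarith
  \<comment> \<open>The flux condition forces A \<le> B since E2 \<le> E1.\<close>
  have "0 \<le> \<rho> * (B * E2 powr (m-1))" using rho B E2_pos by simp
  then have "A * E1 powr (m-1) \<le> B * E2 powr (m-1)" using flux by (simp add: algebra_simps)
  also have "\<dots> \<le> B * E1 powr (m-1)" using E2 m B by (simp add: powr_mono2)
  finally have AB: "A \<le> B" using E1 by simp
  have "(A * E1 powr (m-1) - B * E2 powr (m-1)) / (A+B) \<le> - \<rho> * (B * E2 powr (m-1)) / (A+B)"
    using flux A B by (intro divide_right_mono) (auto simp: algebra_simps)
  also have "\<dots> \<le> - \<rho> * E2 powr (m-1) / 2"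
  proof -
    have "\<rho> * E2 powr (m-1) * (A+B) \<le> \<rho> * E2 powr (m-1) * (2*B)"
      using AB rho E2_pos by (simp add: mult_left_mono)
    then show ?thesis using A B by (simp add: field_simps)
  qed
  finally show ?thesis using grad_term unfolding g_def by simp
qed

definition gap :: "real \<Rightarrow> real \<Rightarrow> nat \<Rightarrow> real" where
  "gap s b k = (s / (real (k+3) * ln (real (k+3)))) powr b"

definition layer_mass :: "real \<Rightarrow> real \<Rightarrow> nat \<Rightarrow> real" where
  "layer_mass a \<beta> k = real (k+3) powr a * ln (real (k+3)) powr \<beta>"

lemma gap_pos: "s > 0 \<Longrightarrow> gap s b k > 0"
  unfolding gap_def by simp

lemma gap_Suc_le:
  assumes "s > 0" "b > 0"
  shows "gap s b (Suc k) \<le> gap s b k"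
proof -
  have "real (k+3) * ln (real (k+3)) \<le> real (Suc k+3) * ln (real (Suc k+3))"
    by (intro mult_mono) auto
  then have "s / (real (Suc k+3) * ln (real (Suc k+3))) \<le> s / (real (k+3) * ln (real (k+3)))"
    using assms by (intro divide_left_mono) auto
  then show ?thesis unfolding gap_def using assms by (intro powr_mono2) auto
qed

lemma gap_le_Suc:
  assumes "s > 0" "b > 0"
  shows "gap s b k \<le> 4 powr b * gap s b (Suc k)"
proof -
  define t where "t = real (k+3)"
  have t: "t \<ge> 3" unfolding t_def by simp
  have "3 * t \<le> t * t" using t by (intro mult_right_mono) auto
  then have "t + 1 \<le> t^2" using t unfolding power2_eq_square by linarith
  then have "ln (t+1) \<le> 2 * ln t" using t by (metis ln_le_cancel_iff ln_realpow add_pos_pos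
        less_le_trans zero_less_numeral zero_less_one zero_less_power of_nat_numeral)
  then have "(t+1) * ln (t+1) \<le> 4 * (t * ln t)"
    using t mult_mono[of "t+1" "2*t" "ln (t+1)" "2 * ln t"] by simp
  then have "(4 * s) / (4 * (t * ln t)) \<le> (4 * s) / ((t+1) * ln (t+1))"
    using assms t by (intro divide_left_mono) auto
  then have "s / (t * ln t) \<le> 4 * (s / ((t+1) * ln (t+1)))" by simp
  then have "(s / (t * ln t)) powr b \<le> (4 * (s / ((t+1) * ln (t+1)))) powr b"
    using assms t by (intro powr_mono2) auto
  also have "\<dots> = 4 powr b * (s / ((t+1) * ln (t+1))) powr b"
    by (rule powr_mult)
  finally show ?thesis unfolding gap_def t_def by (simp add: add.commute)
qed

lemma summable_gap:
  assumes "s > 0" "b > 1"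
  shows "summable (gap s b)"
proof (rule summable_comparison_test')
  have "summable (\<lambda>n. real n powr (-b))" using assms summable_real_powr_iff by simp
  from summable_ignore_initial_segment[OF this, of 3]
  have "summable (\<lambda>n. real (n+3) powr (-b))" by simp
  then show "summable (\<lambda>n. s powr b * real (n+3) powr (-b))" by (rule summable_mult)
next
  fix n
  have "1 \<le> ln (real (n+3))"
    using exp_le ln_ge_iff[of "real (n+3)" 1] by simp
  then have "s / (real (n+3) * ln (real (n+3))) \<le> s / real (n+3)"
    using assms by (intro divide_left_mono) auto
  then have "gap s b n \<le> (s / real (n+3)) powr b"
    unfolding gap_def using assms by (intro powr_mono2) auto
  also have "\<dots> = s powr b / real (n+3) powr b" by (rule powr_divide)
  also have "\<dots> = s powr b * real (n+3) powr (-b)" by (simp add: powr_minus divide_inverse)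
  finally show "norm (gap s b n) \<le> s powr b * real (n+3) powr (-b)"
    using gap_pos[OF assms(1), of b n] by simp
qed

lemma gap_powr_inverse:
  assumes "s > 0" "b * d = 1"
  shows "gap s b k powr d = s / (real (k+3) * ln (real (k+3)))"
  unfolding gap_def using assms by (simp add: powr_powr)

lemma layer_mass_gap_powr:
  assumes "s > 0"
  shows "layer_mass (b * (m-1)) (b * (m-1) + \<epsilon>) k * gap s b k powr (m-1)
           = s powr (b * (m-1)) * ln (real (k+3)) powr \<epsilon>"
proof -
  define t where "t = real (k+3)"
  have t: "t > 0" "ln t > 0" unfolding t_def by auto
  have "gap s b k powr (m-1) = s powr (b * (m-1)) / (t powr (b * (m-1)) * ln t powr (b * (m-1)))"
    unfolding gap_def t_def[symmetric] using assms t by (simp add: powr_powr powr_divide powr_mult)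
  then show ?thesis
    unfolding layer_mass_def t_def[symmetric] using t by (simp add: powr_add)
qed

lemma layer_mass_mono:
  assumes "a \<ge> 0" "\<beta> \<ge> 0" "k \<le> n"
  shows "layer_mass a \<beta> k \<le> layer_mass a \<beta> n"
  unfolding layer_mass_def using assms by (intro mult_mono powr_mono2) auto

lemma sum_layer_mass_le:
  assumes a: "a \<ge> 0" and \<beta>: "\<beta> \<ge> 0" and n: "n \<ge> 2"
  shows "(\<Sum>k\<le>n. layer_mass a \<beta> k)
           \<le> (2 * 3 powr a * 3 powr \<beta>) * (real n powr (a+1) * ln (real n) powr \<beta>)"
proof -
  have "4 \<le> real n * real n" using n mult_mono[of 2 "real n" 2 "real n"] by simp
  then have "4 * real n \<le> real n * real n * real n" by (intro mult_right_mono) auto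
  then have "real n + 3 \<le> real n ^ 3" using n unfolding power3_eq_cube by linarith
  then have "ln (real (n+3)) \<le> ln (real n ^ 3)" using n by simp
  then have "ln (real (n+3)) \<le> 3 * ln (real n)" by (simp add: ln_realpow)
  then have last: "layer_mass a \<beta> n \<le> (3 * real n) powr a * (3 * ln (real n)) powr \<beta>"
    unfolding layer_mass_def using a \<beta> n by (intro mult_mono powr_mono2) auto
  have "(\<Sum>k\<le>n. layer_mass a \<beta> k) \<le> real (n+1) * layer_mass a \<beta> n"
    using sum_bounded_above[of "{..n}" "layer_mass a \<beta>"] layer_mass_mono[OF a \<beta>] by simp
  also have "\<dots> \<le> (2 * real n) * ((3 * real n) powr a * (3 * ln (real n)) powr \<beta>)"
    using n last by (intro mult_mono) (auto simp: layer_mass_def)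
  also have "\<dots> = (2 * 3 powr a * 3 powr \<beta>) * (real n powr (a+1) * ln (real n) powr \<beta>)"
    using n by (simp add: powr_mult powr_add)
  finally show ?thesis .
qed

lemma sum_layer_mass_ge:
  assumes a: "a \<ge> 0" and \<beta>: "\<beta> \<ge> 0" and n: "n \<ge> 2"
  shows "((1/2) * (1/2) powr a * (1/2) powr \<beta>) * (real n powr (a+1) * ln (real n) powr \<beta>)
           \<le> (\<Sum>k\<le>n. layer_mass a \<beta> k)"
proof -
  have lower: "(real n / 2) powr a * (ln (real n) / 2) powr \<beta> \<le> layer_mass a \<beta> k"
    if k: "k \<in> {n div 2..n}" for k
  proof -
    have "n \<le> 2 * k + 1" using k by auto
    then have "n \<le> (k+3)^2" by (simp add: power2_eq_square algebra_simps)
    then have "real n \<le> real (k+3) ^ 2" by (metis of_nat_le_iff of_nat_power)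
    then have "ln (real n) \<le> ln (real (k+3) ^ 2)" using n by simp
    then have "ln (real n) \<le> 2 * ln (real (k+3))" by (simp add: ln_realpow)
    moreover have "real n \<le> 2 * real (k+3)" using k by auto
    ultimately show ?thesis
      unfolding layer_mass_def using a \<beta> n by (intro mult_mono powr_mono2) auto
  qed
  have "real n / 2 \<le> real (card {n div 2..n})" by simp
  then have "real n / 2 * ((real n / 2) powr a * (ln (real n) / 2) powr \<beta>)
        \<le> real (card {n div 2..n}) * ((real n / 2) powr a * (ln (real n) / 2) powr \<beta>)"
    by (intro mult_right_mono) auto
  also have "\<dots> \<le> (\<Sum>k\<in>{n div 2..n}. layer_mass a \<beta> k)"
    using lower by (intro sum_bounded_below) auto
  also have "\<dots> \<le> (\<Sum>k\<le>n. layer_mass a \<beta> k)"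
    by (intro sum_mono2) (auto simp: layer_mass_def)
  finally show ?thesis
    using n by (simp add: powr_divide powr_mult powr_add field_simps)
qed

lemma one_minus_ln_ratio_powr_ge:
  fixes t \<epsilon> :: real
  assumes t: "t \<ge> 3" and \<epsilon>: "\<epsilon> > 0"
  shows "min \<epsilon> 1 / (t * ln t) \<le> 1 - (ln (t-1) / ln t) powr \<epsilon>"
proof -
  define x where "x = ln (t-1) / ln t"
  have ln_t: "ln t > 0" using t by simp
  have x: "0 < x" "x < 1" unfolding x_def using t by (auto simp: divide_less_eq)
  have "ln ((t-1)/t) \<le> (t-1)/t - 1" using t by (intro ln_le_minus_one) auto
  then have "1/t \<le> ln t - ln (t-1)" using t by (simp add: ln_div field_simps)
  then have "1 / (t * ln t) \<le> 1 - x" unfolding x_def using ln_t by (simp add: field_simps)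
  then have "min \<epsilon> 1 / (t * ln t) \<le> min \<epsilon> 1 * (1 - x)"
    using \<epsilon> by (metis mult_left_mono times_divide_eq_right mult_1_right min_def less_imp_le zero_le_one)
  also have "\<dots> \<le> 1 - x powr \<epsilon>"
  proof (cases "\<epsilon> \<ge> 1")
    case True
    then have "x powr \<epsilon> \<le> x powr 1" using x by (intro powr_mono') auto
    then show ?thesis using True x by simp
  next
    case False
    have "x powr \<epsilon> * 1 powr (1-\<epsilon>) \<le> \<epsilon>*x + (1-\<epsilon>)*1"
      using False \<epsilon> x by (intro Youngs_inequality_0) auto
    then show ?thesis using False by (simp add: algebra_simps)
  qed
  finally show ?thesis unfolding x_def .
qed

definition branching :: "nat \<Rightarrow> nat \<Rightarrow> nat" where
  "branching N k = (if k = 0 then N else N - 1)"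

definition tree_sphere :: "nat \<Rightarrow> nat \<Rightarrow> nat list set" where
  "tree_sphere N k = {x \<in> tree_V N. length x = k}"

lemma tree_V_Nil: "[] \<in> tree_V N"
  unfolding tree_V_def by simp

lemma tree_V_snoc_iff: "xs @ [a] \<in> tree_V N \<longleftrightarrow> xs \<in> tree_V N \<and> a < branching N (length xs)"
  unfolding tree_V_def branching_def by (auto simp: nth_append less_Suc_eq split: if_splits)

lemma tree_adj_sym: "tree_adj N x y = tree_adj N y x"
  unfolding tree_adj_def by blast

lemma tree_adj_snoc: "x @ [a] \<in> tree_V N \<Longrightarrow> tree_adj N x (x @ [a])"
  unfolding tree_adj_def by (auto simp: tree_V_snoc_iff)

lemma tree_adj_butlast: "x \<in> tree_V N \<Longrightarrow> x \<noteq> [] \<Longrightarrow> tree_adj N x (butlast x)"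
  by (metis append_butlast_last_id tree_adj_snoc tree_adj_sym)

lemma nbrs_tree_adj:
  assumes "x \<in> tree_V N"
  shows "nbrs (tree_adj N) x
           = (if x = [] then {} else {butlast x}) \<union> (\<lambda>a. x @ [a]) ` {..<branching N (length x)}"
proof -
  have "[a] \<in> tree_V N \<longleftrightarrow> a < branching N 0" for a
    using tree_V_snoc_iff[of "[]"] tree_V_Nil by simp
  then show ?thesis
    using assms tree_adj_butlast by (auto simp: nbrs_def tree_adj_def tree_V_snoc_iff)
qed

lemma sum_nbrs_tree_adj:
  assumes "x \<in> tree_V N"
  shows "(\<Sum>y\<in>nbrs (tree_adj N) x. h y)
           = (if x = [] then 0 else h (butlast x)) + (\<Sum>a<branching N (length x). h (x @ [a]))"
proof -
  define P C where "P = (if x = [] then {} else {butlast x})"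
    and "C = (\<lambda>a. x @ [a]) ` {..<branching N (length x)}"
  have "P \<inter> C = {}" unfolding P_def C_def by (auto dest: arg_cong[of _ _ length])
  then have "sum h (P \<union> C) = sum h P + sum h C"
    unfolding P_def C_def by (intro sum.union_disjoint) auto
  moreover have "sum h C = (\<Sum>a<branching N (length x). h (x @ [a]))"
    unfolding C_def by (simp add: sum.reindex inj_on_def)
  ultimately show ?thesis
    unfolding nbrs_tree_adj[OF assms] P_def[symmetric] C_def[symmetric] by (simp add: P_def)
qed

lemma gdist_tree_root:
  assumes "x \<in> tree_V N"
  shows "gdist (tree_adj N) [] x = length x"
proof -
  have walk_length: "(tree_adj N ^^ n) [] y \<Longrightarrow> length y \<le> n" for n y
  proof (induction n arbitrary: y)
    case (Suc n)
    then obtain z where "(tree_adj N ^^ n) [] z" "tree_adj N z y" by auto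
    with Suc.IH show ?case by (fastforce simp: tree_adj_def)
  qed simp
  have "(tree_adj N ^^ length x) [] x" using assms
  proof (induction x rule: rev_induct)
    case (snoc a xs)
    then have "xs \<in> tree_V N" "tree_adj N xs (xs @ [a])"
      by (auto simp: tree_V_snoc_iff intro: tree_adj_snoc)
    with snoc.IH show ?case by auto
  qed simp
  then show ?thesis
    unfolding gdist_def by (rule Least_equality) (use walk_length in auto)
qed

lemma tree_sphere_0: "tree_sphere N 0 = {[]}"
  unfolding tree_sphere_def using tree_V_Nil by auto

lemma tree_sphere_Suc: "tree_sphere N (Suc k) = (\<lambda>(x, a). x @ [a]) ` (tree_sphere N k \<times> {..<branching N k})"
proof (intro set_eqI iffI)
  fix y assume y: "y \<in> tree_sphere N (Suc k)"
  then have "y \<noteq> []" by (auto simp: tree_sphere_def)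
  then have y_snoc: "y = butlast y @ [last y]" by simp
  then have "butlast y \<in> tree_V N \<and> last y < branching N (length (butlast y))"
    using y tree_V_snoc_iff unfolding tree_sphere_def by (metis (no_types, lifting) mem_Collect_eq)
  then show "y \<in> (\<lambda>(x, a). x @ [a]) ` (tree_sphere N k \<times> {..<branching N k})"
    using y y_snoc by (intro image_eqI[of _ _ "(butlast y, last y)"]) (auto simp: tree_sphere_def)
qed (auto simp: tree_sphere_def tree_V_snoc_iff)

lemma finite_tree_sphere: "finite (tree_sphere N k)"
  by (induction k) (auto simp: tree_sphere_0 tree_sphere_Suc)

lemma card_tree_sphere_Suc: "card (tree_sphere N (Suc k)) = card (tree_sphere N k) * branching N k"
  unfolding tree_sphere_Suc by (subst card_image) (auto simp: inj_on_def card_cartesian_product)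

lemma card_tree_sphere_pos: "N \<ge> 2 \<Longrightarrow> card (tree_sphere N k) > 0"
  by (induction k) (auto simp: tree_sphere_0 card_tree_sphere_Suc branching_def)

definition radial_weight :: "nat \<Rightarrow> (nat \<Rightarrow> real) \<Rightarrow> nat list \<Rightarrow> nat list \<Rightarrow> real" where
  "radial_weight N w x y = (if tree_adj N x y then w (min (length x) (length y)) else 0)"

lemma is_weight_radial_weight:
  "(\<And>k. w k > 0) \<Longrightarrow> is_weight (tree_V N) (tree_adj N) (radial_weight N w)"
  unfolding is_weight_def radial_weight_def using tree_adj_sym
  by (auto simp: min.commute less_imp_le)

lemma Wo_radial_weight:
  "Wo (tree_V N) (tree_adj N) (radial_weight N w) [] n
     = (\<Sum>k\<le>n. real (card (tree_sphere N (Suc k))) * w k)"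
proof -
  define B where "B = {x \<in> tree_V N. length x \<le> n}"
  define D where "D = (SIGMA x:B. {..<branching N (length x)})"
  have B_spheres: "B = (\<Union>k\<le>n. tree_sphere N k)" unfolding B_def tree_sphere_def by auto
  have edges: "{(x, y). x \<in> tree_V N \<and> y \<in> tree_V N \<and> tree_adj N x y \<and> gdist (tree_adj N) [] x \<le> n
        \<and> gdist (tree_adj N) [] x < gdist (tree_adj N) [] y} = (\<lambda>(x, a). (x, x @ [a])) ` D"
    unfolding B_def D_def
    by (auto simp: gdist_tree_root tree_adj_def tree_V_snoc_iff image_iff)
  have "Wo (tree_V N) (tree_adj N) (radial_weight N w) [] n
      = (\<Sum>(x, a)\<in>D. radial_weight N w x (x @ [a]))"
    unfolding Wo_def edges by (subst sum.reindex) (auto simp: inj_on_def case_prod_unfold)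
  also have "\<dots> = (\<Sum>(x, a)\<in>D. w (length x))"
    unfolding D_def B_def
    by (intro sum.cong refl) (auto simp: radial_weight_def tree_adj_snoc tree_V_snoc_iff)
  also have "\<dots> = (\<Sum>x\<in>B. real (branching N (length x)) * w (length x))"
    unfolding D_def using finite_tree_sphere by (subst sum.Sigma[symmetric]) (auto simp: B_spheres)
  also have "\<dots> = (\<Sum>k\<le>n. \<Sum>x\<in>tree_sphere N k. real (branching N k) * w k)"
    unfolding B_spheres using finite_tree_sphere
    by (subst sum.UNION_disjoint) (auto simp: tree_sphere_def intro!: sum.cong)
  also have "\<dots> = (\<Sum>k\<le>n. real (card (tree_sphere N (Suc k))) * w k)"
    by (simp add: card_tree_sphere_Suc mult.assoc)
  finally show ?thesis .
qed

lemma sum_nbrs_radial_weight: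
  assumes "x \<in> tree_V N"
  shows "(\<Sum>y\<in>nbrs (tree_adj N) x. radial_weight N w x y * f (length y))
           = (if x = [] then 0 else w (length x - 1)) * f (length x - 1)
             + real (branching N (length x)) * w (length x) * f (Suc (length x))"
proof -
  have "(\<Sum>a<branching N (length x). radial_weight N w x (x @ [a]) * f (length (x @ [a])))
      = (\<Sum>a<branching N (length x). w (length x) * f (Suc (length x)))"
    using assms by (intro sum.cong) (auto simp: radial_weight_def tree_adj_snoc tree_V_snoc_iff)
  moreover have "x \<noteq> [] \<Longrightarrow> radial_weight N w x (butlast x) = w (length x - 1)"
    using assms tree_adj_butlast by (simp add: radial_weight_def)
  ultimately show ?thesis
    unfolding sum_nbrs_tree_adj[OF assms] by simp
qed

lemma abs_powr_mult_self:
  fixes e m :: real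
  assumes "e > 0"
  shows "\<bar>e\<bar> powr (m-2) * e = e powr (m-1)" and "\<bar>-e\<bar> powr (m-2) * (-e) = - (e powr (m-1))"
proof -
  show "\<bar>e\<bar> powr (m-2) * e = e powr (m-1)"
    using assms powr_add[of e "m-2" 1] by simp
  then show "\<bar>-e\<bar> powr (m-2) * (-e) = - (e powr (m-1))" by simp
qed

lemma radial_mLap_gradn:
  fixes v E w :: "nat \<Rightarrow> real"
  assumes x: "x \<in> tree_V N" and v: "\<And>k. v k - v (Suc k) = E k" and E: "\<And>k. E k > 0"
  defines "A \<equiv> if x = [] then 0 else w (length x - 1)"
    and "B \<equiv> real (branching N (length x)) * w (length x)"
  shows "mLap (tree_adj N) (radial_weight N w) m (\<lambda>y. v (length y)) x
           = (A * E (length x - 1) powr (m-1) - B * E (length x) powr (m-1)) / (A + B)"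
    and "gradn (tree_adj N) (radial_weight N w) (\<lambda>y. v (length y)) x
           = sqrt ((A * E (length x - 1)^2 + B * E (length x)^2) / (2 * (A + B)))"
proof -
  let ?k = "length x"
  have sum_radial: "(\<Sum>y\<in>nbrs (tree_adj N) x. radial_weight N w x y * f (length y))
      = A * f (?k - 1) + B * f (Suc ?k)" for f
    unfolding A_def B_def by (rule sum_nbrs_radial_weight[OF x])
  \<comment> \<open>A vanishes at the root, so the junk value at index 0 - 1 = 0 is harmless\<close>
  have parent: "A * f (v (?k - 1) - v ?k) = A * f (E (?k - 1))" for f :: "real \<Rightarrow> real"
    using v[of "?k - 1"] by (cases "x = []") (auto simp: A_def)
  have child: "v (Suc ?k) - v ?k = - E ?k" using v[of ?k] by simp
  have vmeas: "vmeas (tree_adj N) (radial_weight N w) x = A + B"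
    unfolding vmeas_def using sum_radial[of "\<lambda>_. 1"] by simp
  have "(\<Sum>y\<in>nbrs (tree_adj N) x.
          radial_weight N w x y * \<bar>v (length y) - v ?k\<bar> powr (m-2) * (v (length y) - v ?k))
      = A * E (?k - 1) powr (m-1) - B * E ?k powr (m-1)"
    using sum_radial[of "\<lambda>l. \<bar>v l - v ?k\<bar> powr (m-2) * (v l - v ?k)"]
      parent[of "\<lambda>d. \<bar>d\<bar> powr (m-2) * d"]
    by (simp add: child abs_powr_mult_self[OF E] mult.assoc)
  then show "mLap (tree_adj N) (radial_weight N w) m (\<lambda>y. v (length y)) x
           = (A * E (?k - 1) powr (m-1) - B * E ?k powr (m-1)) / (A + B)"
    unfolding mLap_def vmeas by simp
  have "(\<Sum>y\<in>nbrs (tree_adj N) x. radial_weight N w x y * (v (length y) - v ?k)\<^sup>2)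
      = A * E (?k - 1)^2 + B * E ?k^2"
    using sum_radial[of "\<lambda>l. (v l - v ?k)\<^sup>2"] parent[of "\<lambda>d. d\<^sup>2"] by (simp add: child)
  then show "gradn (tree_adj N) (radial_weight N w) (\<lambda>y. v (length y)) x
           = sqrt ((A * E (?k - 1)^2 + B * E ?k^2) / (2 * (A + B)))"
    unfolding gradn_def vmeas by (simp add: sum_divide_distrib[symmetric])
qed

lemma radial_supersolution:
  fixes w E \<rho> :: "nat \<Rightarrow> real" and R m p q :: real
  assumes N: "N \<ge> 2" and m: "m > 1" and p: "p \<le> 0" and q: "q > 0"
    and E_pos: "\<And>k. E k > 0" and E_summable: "summable E"
    and E_ratio: "\<And>k. E (Suc k) \<le> E k \<and> E k \<le> R * E (Suc k)"
    and w_pos: "\<And>k. w k > 0"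
    and flux: "\<And>k. w k * E k powr (m-1)
                 \<le> (1 - \<rho> (Suc k)) * (real (branching N (Suc k)) * w (Suc k) * E (Suc k) powr (m-1))"
    and \<rho>_0: "\<rho> 0 \<le> 1"
    and slope: "\<And>k. 2 * R powr q * E k powr (q-m+1) \<le> \<rho> k"
  shows "nontrivial_pos_solution (tree_V N) (tree_adj N) (radial_weight N w) m p q
           (\<lambda>x. 1 + (\<Sum>i. E (i + length x)))"
proof -
  define v where "v k = 1 + (\<Sum>i. E (i + k))" for k
  have E_tail_summable: "summable (\<lambda>i. E (i + k))" for k
    using summable_ignore_initial_segment[OF E_summable, of k] by simp
  have v_ge_1: "v k \<ge> 1" for k
    unfolding v_def using suminf_nonneg[OF E_tail_summable] E_pos less_imp_le by auto
  have v_diff: "v k - v (Suc k) = E k" for k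
    unfolding v_def using suminf_split_head[OF E_tail_summable[of k]] by simp
  have "1 * E 1 \<le> R * E 1" using E_ratio[of 0] by simp
  then have R: "R \<ge> 1" using E_pos[of 1] by (simp add: mult_le_cancel_right)
  have branching_pos: "branching N k > 0" for k
    using N by (simp add: branching_def)
  have supersolution: "mLap (tree_adj N) (radial_weight N w) m (\<lambda>x. v (length x)) x
      + v (length x) powr p * gradn (tree_adj N) (radial_weight N w) (\<lambda>x. v (length x)) x powr q
      \<le> 0" if x: "x \<in> tree_V N" for x
  proof (cases "length x")
    case 0
    define B where "B = real (branching N 0) * w 0"
    have root_flux: "0 * E 0 powr (m-1) \<le> (1 - \<rho> 0) * (B * E 0 powr (m-1))"
      using \<rho>_0 branching_pos[of 0] w_pos[of 0] by (simp add: B_def)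
    have "(0 * E 0 powr (m-1) - B * E 0 powr (m-1)) / (0 + B)
        + v 0 powr p * sqrt ((0 * E 0^2 + B * E 0^2) / (2 * (0 + B))) powr q \<le> 0"
      by (rule mLap_gradient_balance[where R = R and \<rho> = "\<rho> 0"])
        (use branching_pos w_pos E_pos R v_ge_1 p q m root_flux slope[of 0] in \<open>auto simp: B_def\<close>)
    then show ?thesis
      unfolding radial_mLap_gradn[where v = v and E = E, OF x v_diff E_pos] using 0 B_def by simp
  next
    case (Suc j)
    define B where "B = real (branching N (Suc j)) * w (Suc j)"
    have "(w j * E j powr (m-1) - B * E (Suc j) powr (m-1)) / (w j + B)
        + v (Suc j) powr p * sqrt ((w j * E j^2 + B * E (Suc j)^2) / (2 * (w j + B))) powr q \<le> 0"
      by (rule mLap_gradient_balance[where R = R and \<rho> = "\<rho> (Suc j)"])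
        (use branching_pos w_pos E_pos E_ratio[of j] v_ge_1 p q m flux[of j] slope[of "Suc j"]
          in \<open>auto simp: B_def less_imp_le\<close>)
    then show ?thesis
      unfolding radial_mLap_gradn[where v = v and E = E, OF x v_diff E_pos] using Suc B_def by auto
  qed
  have "[0] \<in> tree_V N"
    using tree_V_snoc_iff[of "[]" 0 N] tree_V_Nil branching_pos by simp
  moreover have "v (length []) \<noteq> v (length [0])"
    using v_diff[of 0] E_pos[of 0] by simp
  ultimately show ?thesis
    unfolding nontrivial_pos_solution_def v_def[symmetric]
    using v_ge_1 supersolution tree_V_Nil by (force intro: less_le_trans[OF zero_less_one])
qed

lemma log_corrected_radial_supersolution:
  fixes m p q \<epsilon> :: real
  assumes N: "N \<ge> 2" and m: "m > 1" and p: "p \<le> 0" and q: "m - 1 < q" "q < m" and \<epsilon>: "\<epsilon> > 0"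
  defines "a \<equiv> (m-1) / (q-m+1)"
  shows "\<exists>u. nontrivial_pos_solution (tree_V N) (tree_adj N)
           (radial_weight N (\<lambda>k. layer_mass a (a+\<epsilon>) k / real (card (tree_sphere N (Suc k)))))
           m p q u"
proof -
  define b where "b = 1 / (q-m+1)"
  have b: "b > 1" "a = b * (m-1)" "b * (q-m+1) = 1"
    using q by (auto simp: a_def b_def)
  define s where "s = min \<epsilon> 1 / (2 * 4 powr (b*q))"
  have s: "s > 0" using \<epsilon> by (simp add: s_def)
  define w where "w k = layer_mass a (a+\<epsilon>) k / real (card (tree_sphere N (Suc k)))" for k
  define \<rho> where "\<rho> k = 1 - (ln (real (k+2)) / ln (real (k+3))) powr \<epsilon>" for k
  have card_pos: "real (card (tree_sphere N k)) > 0" for k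
    using card_tree_sphere_pos[OF N] by simp
  have flux: "w k * gap s b k powr (m-1)
      = s powr a * ln (real (k+3)) powr \<epsilon> / real (card (tree_sphere N (Suc k)))" for k
    unfolding w_def b(2) using layer_mass_gap_powr[OF s] by simp
  have children: "real (branching N (Suc k)) * w (Suc k)
      = layer_mass a (a+\<epsilon>) (Suc k) / real (card (tree_sphere N (Suc k)))" for k
    unfolding w_def card_tree_sphere_Suc[of N "Suc k"] using card_pos[of "Suc k"] N
    by (simp add: branching_def)
  have "nontrivial_pos_solution (tree_V N) (tree_adj N) (radial_weight N w) m p q
          (\<lambda>x. 1 + (\<Sum>i. gap s b (i + length x)))"
  proof (rule radial_supersolution[where R = "4 powr b" and \<rho> = \<rho>])
    show "0 < gap s b k" "gap s b (Suc k) \<le> gap s b k \<and> gap s b k \<le> 4 powr b * gap s b (Suc k)"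
      "0 < w k" for k
      using gap_pos[OF s] gap_Suc_le[OF s] gap_le_Suc[OF s] b card_pos
      by (auto simp: w_def layer_mass_def)
    show "summable (gap s b)" using summable_gap[OF s b(1)] .
    show "\<rho> 0 \<le> 1" by (simp add: \<rho>_def)
    show "w k * gap s b k powr (m-1)
        \<le> (1 - \<rho> (Suc k)) * (real (branching N (Suc k)) * w (Suc k) * gap s b (Suc k) powr (m-1))" for k
    proof -
      have "real (branching N (Suc k)) * w (Suc k) * gap s b (Suc k) powr (m-1)
          = s powr a * ln (real (k+4)) powr \<epsilon> / real (card (tree_sphere N (Suc k)))"
        unfolding children using layer_mass_gap_powr[OF s, of b m \<epsilon> "Suc k"] by (simp add: b(2) add.commute)
      moreover have "1 - \<rho> (Suc k) = ln (real (k+3)) powr \<epsilon> / ln (real (k+4)) powr \<epsilon>"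
        unfolding \<rho>_def by (simp add: powr_divide add.commute)
      ultimately show ?thesis unfolding flux by (simp add: mult.commute)
    qed
    show "2 * (4 powr b) powr q * gap s b k powr (q-m+1) \<le> \<rho> k" for k
    proof -
      have "2 * (4 powr b) powr q * gap s b k powr (q-m+1)
          = min \<epsilon> 1 / (real (k+3) * ln (real (k+3)))"
        using s by (simp add: gap_powr_inverse b(3) powr_powr s_def)
      also have "\<dots> \<le> 1 - (ln (real (k+3) - 1) / ln (real (k+3))) powr \<epsilon>"
        using \<epsilon> by (intro one_minus_ln_ratio_powr_ge) auto
      finally show ?thesis by (simp add: \<rho>_def add.commute)
    qed
  qed (use N m p q in auto)
  then show ?thesis unfolding w_def by blast
qed

theorem mainTheorem10:
  fixes N :: nat and m p q \<epsilon> :: real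
  assumes "N \<ge> 2" and "m > 1" and "p < 0" and "m - 1 < q" and "q < m" and "\<epsilon> > 0"
  shows "\<exists>mu. is_weight (tree_V N) (tree_adj N) mu \<and>
     (\<exists>c C. c > 0 \<and> C > 0 \<and> (\<forall>n::nat. n \<ge> 2 \<longrightarrow>
        c * (real n powr (q / (q - m + 1)) * ln (real n) powr ((m - 1) / (q - m + 1) + \<epsilon>))
          \<le> Wo (tree_V N) (tree_adj N) mu [] n \<and>
        Wo (tree_V N) (tree_adj N) mu [] n
          \<le> C * (real n powr (q / (q - m + 1)) * ln (real n) powr ((m - 1) / (q - m + 1) + \<epsilon>)))) \<and>
     (\<exists>u. nontrivial_pos_solution (tree_V N) (tree_adj N) mu m p q u)"
proof -
  define a where "a = (m-1) / (q-m+1)"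
  define w where "w k = layer_mass a (a+\<epsilon>) k / real (card (tree_sphere N (Suc k)))" for k
  have a: "a > 0" "q / (q-m+1) = a + 1"
    using assms by (auto simp: a_def field_simps)
  have card_pos: "real (card (tree_sphere N k)) > 0" for k
    using card_tree_sphere_pos[OF assms(1)] by simp
  have "is_weight (tree_V N) (tree_adj N) (radial_weight N w)"
    using card_pos by (intro is_weight_radial_weight) (simp add: w_def layer_mass_def)
  moreover have "Wo (tree_V N) (tree_adj N) (radial_weight N w) [] n = (\<Sum>k\<le>n. layer_mass a (a+\<epsilon>) k)" for n
    unfolding Wo_radial_weight w_def using card_pos by simp
  moreover have "\<exists>u. nontrivial_pos_solution (tree_V N) (tree_adj N) (radial_weight N w) m p q u"
    unfolding w_def a_def using log_corrected_radial_supersolution assms by simp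
  ultimately show ?thesis
    using sum_layer_mass_le[of a "a+\<epsilon>"] sum_layer_mass_ge[of a "a+\<epsilon>"] a assms(6)
    unfolding a(2) a_def[symmetric]
    by (intro exI[of _ "radial_weight N w"] conjI exI[of _ "(1/2) * (1/2) powr a * (1/2) powr (a+\<epsilon>)"]
        exI[of _ "2 * 3 powr a * 3 powr (a+\<epsilon>)"]) auto
qed

end
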